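(* Fix integers $t\geq 1$ and $s\geq 3$. Then, as $m\to\infty$ (with $m\ge s$), \[ \frac{t}{(s-1)!}\, m^{s-2}+O(m^{s-3}\log m) \leq R_t(m-s,m)\leq \frac{t}{(s-2)!}\,m^{s-2}+O(m^{s-3}), \] where the constants in the $O(\cdot)$ terms may depend on $s$ and $t$.
   Context: For a $t\times n$ matrix $\mathbf{v}$ over $\mathbb{F}_q$ with rows $\overline{v}_1,\dots,\overline{v}_t$, its $t$-weight is $\mathrm{wt}^{(t)}(\mathbf{v})=\left|\bigcup_{i=1}^t \mathrm{supp}(\overline{v}_i)\right|$, and $d^{(t)}(\mathbf{u},\mathbf{v})=\mathrm{wt}^{(t)}(\mathbf{u}-\mathbf{v})$. For a linear code $C\subseteq\mathbb{F}_q^n$ and $t\in\mathbb{N}$, let $C^t$ be the set of $t\times n$ matrices all of whose rows lie in $C$. The $t$-th generalized covering radius $R_t(C)$ is the smallest integer $\rho$ such that for every $\mathbf{v}\in\mathbb{F}_q^{t\times n}$ there is $\mathbf{c}\in C^t$ with $d^{(t)}(\mathbf{v},\mathbf{c})\leq \rho$. Binary Reed–Muller codes $\mathrm{RM}(r,m)\subseteq\mathbb{F}_2^{2^m}$ ($0\le r\le m$) are defined recursively: $\mathrm{RM}(0,m)=\{\overline{0},\overline{1}\}$, $\mathrm{RM}(m,m)=\mathbb{F}_2^{2^m}$, and for $1\leq r\leq m-1$, $\mathrm{RM}(r,m)=\{(\overline{u},\overline{u}+\overline{v}) : \overline{u}\in \mathrm{RM}(r,m-1),\ \overline{v}\in\mathrm{RM}(r-1,m-1)\}$.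 It is a linear code of length $2^m$ and dimension $\sum_{i=0}^r\binom{m}{i}$. Write $R_t(r,m)=R_t(\mathrm{RM}(r,m))$. *)

theory Defs
  imports Complex_Main "HOL-Library.Landau_Symbols"
begin

text \<open>Binary words of length n are boolean lists of length n (False = 0, True = 1,
  addition in F_2 is exclusive or).\<close>

definition word_add :: "bool list \<Rightarrow> bool list \<Rightarrow> bool list" where
  "word_add u v = map2 (\<noteq>) u v"

text \<open>Binary Reed--Muller code RM(r,m), following the recursive definition of the paper.
  (For r > m we take the full space; this case is never used.)\<close>

fun RM :: "nat \<Rightarrow> nat \<Rightarrow> bool list set" where
  "RM r m =
     (if r = 0 then {replicate (2^m) False, replicate (2^m) True}
      else if m \<le> r then {w. length w = 2^m}
      else {u @ word_add u v | u v. u \<in> RM r (m - 1) \<and> v \<in> RM (r - 1) (m - 1)})"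

text \<open>A t x n matrix is represented by its rows V 0, ..., V (t-1), each a word of length n.
  The t-distance is the size of the union of the supports of the rows of V - W.\<close>

definition t_dist :: "nat \<Rightarrow> nat \<Rightarrow> (nat \<Rightarrow> bool list) \<Rightarrow> (nat \<Rightarrow> bool list) \<Rightarrow> nat" where
  "t_dist t n V W = card {j. j < n \<and> (\<exists>i<t. V i ! j \<noteq> W i ! j)}"

definition gen_cov_radius :: "nat \<Rightarrow> nat \<Rightarrow> bool list set \<Rightarrow> nat" where
  "gen_cov_radius t n C =
     (LEAST \<rho>. \<forall>V. (\<forall>i<t. length (V i) = n) \<longrightarrow>
                    (\<exists>W. (\<forall>i<t. W i \<in> C) \<and> t_dist t n V W \<le> \<rho>))"

definition R_RM :: "nat \<Rightarrow> nat \<Rightarrow> nat \<Rightarrow> nat" where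
  "R_RM t r m = gen_cov_radius t (2^m) (RM r m)"

end

theory Submission
  imports Defs "HOL-Library.FuncSet"
begin

text \<open>
  Upper bound: the ordinary covering radius rho(r,m) of RM(r,m) satisfies
  rho(r,m) <= rho(r,m-1) + rho(r-1,m-1) by the (u | u+v) construction, and rho(0,m) <= 2^m.
  Moreover rho(m-3,m) <= m+2: RM(m-3,m) is the dual of RM(2,m), so a word is moved into it by
  adding any word with the same parities against all monomials of degree at most 2, and such a
  word of weight m+2 exists: the quadratic part of the parities is an alternating form, hence a
  sum of at most m/2 hyperbolic forms, each realized by two points, and two more points take
  care of the linear and constant parts.
  Unrolling the recursion gives rho(m-s,m) <= C(m,s-2) + 2^s C(m,s-3), and R_t <= t rho.

  Lower bound: the t-balls of radius R_t around the |C|^t tuples of codewords cover all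
  2^(nt) tuples of words and have at most (n 2^t)^R_t elements each; together with
  |RM(m-s,m)| <= 2^(2^m - C(m,s-1)) this gives t C(m,s-1) <= (m+t) R_t(m-s,m).
\<close>

section \<open>Reed--Muller codes\<close>

declare RM.simps [simp del]

lemma RM_order_zero: "RM 0 m = {replicate (2^m) False, replicate (2^m) True}"
  by (simp add: RM.simps)

lemma RM_full: "0 < r \<Longrightarrow> m \<le> r \<Longrightarrow> RM r m = {w. length w = 2^m}"
  by (simp add: RM.simps)

lemma RM_Suc:
  "0 < r \<Longrightarrow> r \<le> m \<Longrightarrow>
   RM r (Suc m) = {u @ word_add u v | u v. u \<in> RM r m \<and> v \<in> RM (r - 1) m}"
  by (subst RM.simps) simp

lemma RM_Suc_cases:
  obtains "r = 0" | "0 < r" "Suc m \<le> r" | "0 < r" "r \<le> m"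
  by linarith

lemma length_word_add [simp]: "length (word_add x y) = min (length x) (length y)"
  by (simp add: word_add_def)

lemma nth_word_add [simp]:
  "j < length x \<Longrightarrow> j < length y \<Longrightarrow> word_add x y ! j = (x ! j \<noteq> y ! j)"
  by (simp add: word_add_def)

lemma take_word_add: "take n (word_add x y) = word_add (take n x) (take n y)"
  by (simp add: word_add_def take_zip take_map)

lemma drop_word_add: "drop n (word_add x y) = word_add (drop n x) (drop n y)"
  by (simp add: word_add_def drop_zip drop_map)

lemma word_add_cancel_left: "length x = length y \<Longrightarrow> word_add x (word_add x y) = y"
  by (intro nth_equalityI) auto

lemma word_add_replicate_False: "length x = n \<Longrightarrow> word_add x (replicate n False) = x"
  by (intro nth_equalityI) auto

lemma length_RM: "w \<in> RM r m \<Longrightarrow> length w = 2^m"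
proof (induction m arbitrary: r w)
  case 0
  then show ?case by (cases "r = 0") (auto simp: RM_order_zero RM_full)
next
  case (Suc m)
  then show ?case
    by (cases rule: RM_Suc_cases[where r = r and m = m]) (auto simp: RM_order_zero RM_full RM_Suc)
qed

lemma replicate_False_in_RM: "replicate (2^m) False \<in> RM r m"
proof (induction m arbitrary: r)
  case 0
  then show ?case by (cases "r = 0") (auto simp: RM_order_zero RM_full)
next
  case (Suc m)
  have "replicate (2^Suc m) False =
        replicate (2^m) False @ word_add (replicate (2^m) False) (replicate (2^m) False)"
    by (simp add: word_add_def flip: replicate_add)
  with Suc.IH show ?case
    by (cases rule: RM_Suc_cases[where r = r and m = m]) (auto simp: RM_order_zero RM_full RM_Suc)
qed

lemma append_self_in_RM_order_zero: "u \<in> RM 0 m \<Longrightarrow> u @ u \<in> RM 0 (Suc m)"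
  by (auto simp: RM_order_zero mult_2 simp flip: replicate_add)

lemma finite_words: "finite {w :: bool list. length w = n}"
  using finite_lists_length_eq[of "UNIV :: bool set" n] by simp

lemma card_words: "card {w :: bool list. length w = n} = 2^n"
  using card_lists_length_eq[of "UNIV :: bool set" n] by simp

lemma finite_RM: "finite (RM r m)"
  by (rule finite_subset[OF _ finite_words[of "2^m"]]) (auto simp: length_RM)

lemma card_RM_le: "card (RM r m) * 2^(m choose (r + 1)) \<le> 2^(2^m)"
proof (induction m arbitrary: r)
  case 0
  then show ?case by (cases "r = 0") (auto simp: RM_order_zero RM_full card_words)
next
  case (Suc m)
  show ?case
  proof (cases rule: RM_Suc_cases[where r = r and m = m])
    case 1
    have "Suc m + 1 \<le> 2^Suc m"
      using less_exp[of "Suc m"] by simp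
    then have "(2::nat) ^ (Suc m + 1) \<le> 2^(2^Suc m)"
      by (rule power_increasing) simp
    moreover have "card (RM r (Suc m)) \<le> 2"
      using 1 by (simp add: RM_order_zero card_insert_le_m1)
    ultimately show ?thesis
      using 1 by (simp add: order_trans[OF mult_le_mono1])
  next
    case 2
    then show ?thesis by (simp add: RM_full card_words binomial_eq_0)
  next
    case 3
    let ?f = "\<lambda>(u, v). u @ word_add u v"
    have "RM r (Suc m) = ?f ` (RM r m \<times> RM (r - 1) m)"
      using 3 by (auto simp: RM_Suc)
    then have "card (RM r (Suc m)) \<le> card (RM r m) * card (RM (r - 1) m)"
      using card_image_le[of "RM r m \<times> RM (r - 1) m" ?f] finite_RM
      by (simp add: card_cartesian_product)
    moreover have "Suc m choose (r + 1) = (m choose (r + 1)) + (m choose (r - 1 + 1))"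
      using 3 by simp
    ultimately have "card (RM r (Suc m)) * 2^(Suc m choose (r + 1))
        \<le> (card (RM r m) * 2^(m choose (r + 1))) * (card (RM (r - 1) m) * 2^(m choose (r - 1 + 1)))"
      by (simp add: power_add)
    also have "\<dots> \<le> 2^(2^m) * 2^(2^m)"
      by (rule mult_le_mono) (use Suc.IH in auto)
    also have "\<dots> = 2^(2^Suc m)"
      by (simp flip: power_add)
    finally show ?thesis .
  qed
qed

section \<open>Parity checks\<close>

text \<open>Position j < 2^m stands for the set of binary digits of j. Then monomial_count m T w
  is the number of positions in the support of w that contain T, i.e. the inner product of w
  with the evaluation vector of the monomial with variable set T.\<close>

fun monomial_count :: "nat \<Rightarrow> nat set \<Rightarrow> bool list \<Rightarrow> nat" where
  "monomial_count 0 T w = (if T = {} \<and> w ! 0 then 1 else 0)"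
| "monomial_count (Suc k) T w =
     (if k \<in> T then 0 else monomial_count k T (take (2^k) w))
     + monomial_count k (T - {k}) (drop (2^k) w)"

lemma monomial_count_replicate_False: "monomial_count k T (replicate (2^k) False) = 0"
  by (induction k arbitrary: T) auto

lemma even_monomial_count_word_add:
  "length x = 2^m \<Longrightarrow> length y = 2^m \<Longrightarrow>
   even (monomial_count m T (word_add x y)) \<longleftrightarrow>
   (even (monomial_count m T x) \<longleftrightarrow> even (monomial_count m T y))"
proof (induction m arbitrary: T x y)
  case (Suc k)
  then show ?case
    using Suc.IH[of "take (2^k) x" "take (2^k) y"] Suc.IH[of "drop (2^k) x" "drop (2^k) y"]
    by (auto simp: take_word_add drop_word_add)
qed auto

lemma eq_replicate_False_if_monomial_counts_even:
  assumes "length w = 2^m" and "\<And>T. T \<subseteq> {..<m} \<Longrightarrow> even (monomial_count m T w)"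
  shows "w = replicate (2^m) False"
  using assms
proof (induction m arbitrary: w)
  case 0
  then obtain b where "w = [b]"
    by (auto simp: length_Suc_conv)
  with "0.prems"(2)[of "{}"] show ?case by auto
next
  case (Suc k)
  let ?w1 = "take (2^k) w" and ?w2 = "drop (2^k) w"
  have w2: "?w2 = replicate (2^k) False"
  proof (rule Suc.IH)
    fix T assume "T \<subseteq> {..<k}"
    then have "k \<notin> T" "insert k T \<subseteq> {..<Suc k}" by auto
    then show "even (monomial_count k T ?w2)"
      using Suc.prems(2)[of "insert k T"] by simp
  qed (use Suc.prems in simp)
  have w1: "?w1 = replicate (2^k) False"
  proof (rule Suc.IH)
    fix T assume "T \<subseteq> {..<k}"
    then have "k \<notin> T" "T \<subseteq> {..<Suc k}" by auto
    then show "even (monomial_count k T ?w1)"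
      using Suc.prems(2)[of T] w2 by (simp add: monomial_count_replicate_False)
  qed (use Suc.prems in simp)
  have "w = ?w1 @ ?w2" by simp
  also have "\<dots> = replicate (2^Suc k) False"
    using w1 w2 by (simp flip: replicate_add)
  finally show ?case .
qed

text \<open>One half of the duality between RM(r,m) and RM(m-r-1,m).\<close>

lemma in_RM_if_monomial_counts_even:
  assumes "length w = 2^m"
    and "\<And>T. T \<subseteq> {..<m} \<Longrightarrow> card T + r < m \<Longrightarrow> even (monomial_count m T w)"
  shows "w \<in> RM r m"
  using assms
proof (induction m arbitrary: r w)
  case 0
  then obtain b where "w = [b]"
    by (auto simp: length_Suc_conv)
  then show ?case
    by (cases "r = 0") (cases b, auto simp: RM_order_zero RM_full)
next
  case (Suc k)
  let ?u = "take (2^k) w" and ?v = "word_add (take (2^k) w) (drop (2^k) w)"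
  have len: "length ?u = 2^k" "length (drop (2^k) w) = 2^k" "length ?v = 2^k"
    using Suc.prems(1) by auto
  have u_checks: "even (monomial_count k T ?u)" if "T \<subseteq> {..<k}" "card T + r < k" for T
  proof -
    have "k \<notin> T" "finite T" "T \<subseteq> {..<Suc k}" "insert k T \<subseteq> {..<Suc k}"
      using that finite_subset by auto
    then show ?thesis
      using that Suc.prems(2)[of "insert k T"] Suc.prems(2)[of T] by auto
  qed
  have v_checks: "even (monomial_count k T ?v)" if "T \<subseteq> {..<k}" "card T + r \<le> k" for T
  proof -
    have "k \<notin> T" "T \<subseteq> {..<Suc k}" "card T + r < Suc k"
      using that by auto
    then show ?thesis
      using Suc.prems(2)[of T] even_monomial_count_word_add[OF len(1,2), of T] by simp
  qed
  have w_eq: "w = ?u @ word_add ?u ?v"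
    using len by (simp add: word_add_cancel_left)
  show ?case
  proof (cases rule: RM_Suc_cases[where r = r and m = k])
    case 1
    have "?v = replicate (2^k) False"
    proof (rule eq_replicate_False_if_monomial_counts_even[OF len(3)])
      fix T assume "T \<subseteq> {..<k}"
      moreover from this have "card T \<le> k"
        using card_mono[of "{..<k}" T] by simp
      ultimately show "even (monomial_count k T ?v)"
        using v_checks 1 by simp
    qed
    with w_eq len(1) have "w = ?u @ ?u"
      by (metis word_add_replicate_False)
    moreover have "?u \<in> RM 0 k"
      using Suc.IH[OF len(1)] u_checks 1 by blast
    ultimately show ?thesis
      using 1 append_self_in_RM_order_zero by metis
  next
    case 2
    then show ?thesis
      using Suc.prems(1) by (simp add: RM_full)
  next
    case 3
    have "?u \<in> RM r k"
      using Suc.IH[OF len(1)] u_checks by blast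
    moreover have "?v \<in> RM (r - 1) k"
      using Suc.IH[OF len(3)] v_checks 3 by simp
    ultimately show ?thesis
      using 3 w_eq by (auto simp: RM_Suc)
  qed
qed

section \<open>Low-weight words with prescribed degree-two parities\<close>

text \<open>With positions read as subsets of {..<m} as for monomial_count, unit_vector_sum m ps
  is the sum of the unit words at the positions listed in ps.\<close>

fun unit_vector_sum :: "nat \<Rightarrow> nat set list \<Rightarrow> bool list" where
  "unit_vector_sum 0 ps = [odd (length ps)]"
| "unit_vector_sum (Suc k) ps =
     unit_vector_sum k (filter (\<lambda>p. k \<notin> p) ps)
     @ unit_vector_sum k (map (\<lambda>p. p - {k}) (filter (\<lambda>p. k \<in> p) ps))"

lemma length_unit_vector_sum [simp]: "length (unit_vector_sum m ps) = 2^m"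
  by (induction m arbitrary: ps) auto

lemma weight_unit_vector_sum_le: "length (filter (\<lambda>b. b) (unit_vector_sum m ps)) \<le> length ps"
proof (induction m arbitrary: ps)
  case 0
  then show ?case by (cases ps) auto
next
  case (Suc k)
  have "length (filter (\<lambda>b. b) (unit_vector_sum (Suc k) ps))
        \<le> length (filter (\<lambda>p. k \<notin> p) ps) + length (filter (\<lambda>p. k \<in> p) ps)"
    using Suc.IH[of "filter (\<lambda>p. k \<notin> p) ps"]
      Suc.IH[of "map (\<lambda>p. p - {k}) (filter (\<lambda>p. k \<in> p) ps)"]
    by simp
  also have "\<dots> = length ps"
    using sum_length_filter_compl[of "\<lambda>p. k \<in> p" ps] by simp
  finally show ?case .
qed

lemma even_monomial_count_unit_vector_sum:
  "T \<subseteq> {..<m} \<Longrightarrow>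
   even (monomial_count m T (unit_vector_sum m ps)) \<longleftrightarrow> even (length (filter (\<lambda>p. T \<subseteq> p) ps))"
proof (induction m arbitrary: T ps)
  case (Suc k)
  let ?ps0 = "filter (\<lambda>p. k \<notin> p) ps"
  let ?ps1 = "map (\<lambda>p. p - {k}) (filter (\<lambda>p. k \<in> p) ps)"
  have count: "monomial_count (Suc k) T (unit_vector_sum (Suc k) ps) =
      (if k \<in> T then 0 else monomial_count k T (unit_vector_sum k ?ps0))
      + monomial_count k (T - {k}) (unit_vector_sum k ?ps1)"
    by simp
  have IH1: "even (monomial_count k (T - {k}) (unit_vector_sum k ?ps1)) \<longleftrightarrow>
      even (length (filter (\<lambda>p. T \<subseteq> p \<and> k \<in> p) ps))"
  proof -
    have "filter (\<lambda>p. T - {k} \<subseteq> p) ?ps1 = map (\<lambda>p. p - {k}) (filter (\<lambda>p. T \<subseteq> p \<and> k \<in> p) ps)"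
      by (auto simp: filter_map o_def intro!: arg_cong[where f = "map _"] filter_cong)
    moreover have "T - {k} \<subseteq> {..<k}"
      using Suc.prems by auto
    ultimately show ?thesis
      using Suc.IH[of "T - {k}" ?ps1] by simp
  qed
  show ?case
  proof (cases "k \<in> T")
    case True
    then have "filter (\<lambda>p. T \<subseteq> p) ps = filter (\<lambda>p. T \<subseteq> p \<and> k \<in> p) ps"
      by (auto intro: filter_cong)
    then show ?thesis
      using True count IH1 by simp
  next
    case False
    then have "T \<subseteq> {..<k}"
      using Suc.prems by (auto simp: less_Suc_eq)
    then have "even (monomial_count k T (unit_vector_sum k ?ps0)) \<longleftrightarrow>
        even (length (filter (\<lambda>p. T \<subseteq> p \<and> k \<notin> p) ps))"
      using Suc.IH[of T ?ps0] by (simp add: conj_commute)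
    moreover have "length (filter (\<lambda>p. T \<subseteq> p) ps) =
        length (filter (\<lambda>p. T \<subseteq> p \<and> k \<in> p) ps) + length (filter (\<lambda>p. T \<subseteq> p \<and> k \<notin> p) ps)"
      by (induction ps) auto
    ultimately show ?thesis
      using False count IH1 by auto
  qed
qed auto

text \<open>Over F_2 we identify a symmetric relation with empty diagonal with an alternating
  bilinear form; hyperbolic_form f g is the form of f \<otimes> g + g \<otimes> f.\<close>

definition hyperbolic_form :: "nat set \<Rightarrow> nat set \<Rightarrow> nat \<Rightarrow> nat \<Rightarrow> bool" where
  "hyperbolic_form f g a b \<longleftrightarrow> (a \<in> f \<and> b \<in> g) \<noteq> (a \<in> g \<and> b \<in> f)"

fun sum_hyperbolic_forms :: "(nat set \<times> nat set) list \<Rightarrow> nat \<Rightarrow> nat \<Rightarrow> bool" where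
  "sum_hyperbolic_forms [] a b = False"
| "sum_hyperbolic_forms ((f, g) # fgs) a b = (hyperbolic_form f g a b \<noteq> sum_hyperbolic_forms fgs a b)"

text \<open>Symplectic Gram--Schmidt: if A a b holds, subtracting the hyperbolic form of the
  columns of a and b clears rows a and b.\<close>

lemma hyperbolic_form_clears_rows:
  assumes "A a b" and "\<And>x. \<not> A x x" and "\<And>x y. A x y = A y x"
    and "\<And>x y. A' x y \<longleftrightarrow> A x y \<noteq> hyperbolic_form {c. A c a} {c. A c b} x y"
  shows "\<not> A' a y" and "\<not> A' b y" and "A' x y = A' y x" and "\<not> A' x x"
    and "A' x y \<Longrightarrow> \<exists>z. A x z"
  using assms by (auto simp: hyperbolic_form_def)

lemma alternating_form_eq_sum_hyperbolic_forms:
  assumes "finite S" and "\<And>a b. A a b \<Longrightarrow> a \<in> S \<and> b \<in> S"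
    and "\<And>a. \<not> A a a" and "\<And>a b. A a b = A b a"
  shows "\<exists>fgs. 2 * length fgs \<le> card S \<and> (\<forall>a b. A a b = sum_hyperbolic_forms fgs a b)"
  using assms
proof (induction "card S" arbitrary: S A rule: less_induct)
  case less
  show ?case
  proof (cases "\<exists>a b. A a b")
    case False
    then show ?thesis by (intro exI[of _ "[]"]) auto
  next
    case True
    then obtain a b where ab: "A a b" by blast
    define f g where "f = {c. A c a}" and "g = {c. A c b}"
    define A' where "A' x y \<longleftrightarrow> A x y \<noteq> hyperbolic_form f g x y" for x y
    note A' = hyperbolic_form_clears_rows[where A = A and a = a and b = b and A' = A',
        OF ab less.prems(3,4) A'_def[unfolded f_def g_def]]
    have abS: "a \<in> S" "b \<in> S" "a \<noteq> b"
      using ab less.prems by auto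
    have supp': "x \<in> S - {a, b} \<and> y \<in> S - {a, b}" if "A' x y" for x y
    proof -
      have "x \<notin> {a, b}" "y \<notin> {a, b}"
        using that A'(1-3) by blast+
      moreover have "x \<in> S" "y \<in> S"
        using that A'(3,5) less.prems(2) by metis+
      ultimately show ?thesis by blast
    qed
    have "card {a, b} \<le> card S"
      using abS less.prems(1) by (intro card_mono) auto
    then have card_S: "card (S - {a, b}) + 2 = card S"
      using abS less.prems(1) by (simp add: card_Diff_subset)
    have "\<exists>fgs. 2 * length fgs \<le> card (S - {a, b}) \<and> (\<forall>x y. A' x y = sum_hyperbolic_forms fgs x y)"
      by (rule less.hyps[OF _ _ supp' A'(4) A'(3)]) (use card_S less.prems(1) in auto)
    then obtain fgs where fgs: "2 * length fgs \<le> card (S - {a, b})"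
        "\<forall>x y. A' x y = sum_hyperbolic_forms fgs x y"
      by blast
    show ?thesis
    proof (intro exI[of _ "(f, g) # fgs"] conjI allI)
      show "2 * length ((f, g) # fgs) \<le> card S"
        using fgs(1) card_S by simp
      show "A x y = sum_hyperbolic_forms ((f, g) # fgs) x y" for x y
        using fgs(2) by (auto simp: A'_def)
    qed
  qed
qed

lemma mem_sym_diff: "x \<in> sym_diff X Y \<longleftrightarrow> (x \<in> X) \<noteq> (x \<in> Y)"
  by auto

text \<open>Over F_2, (r+f)\<otimes>(r+f) + (r+g)\<otimes>(r+g) + (r+f+g)\<otimes>(r+f+g) = r\<otimes>r + f\<otimes>g + g\<otimes>f.\<close>

fun realize_forms :: "nat set \<Rightarrow> (nat set \<times> nat set) list \<Rightarrow> nat set list" where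
  "realize_forms r [] = [r]"
| "realize_forms r ((f, g) # fgs) =
     sym_diff r f # sym_diff r g # realize_forms (sym_diff (sym_diff r f) g) fgs"

lemma length_realize_forms: "length (realize_forms r fgs) = 2 * length fgs + 1"
  by (induction r fgs rule: realize_forms.induct) auto

lemma odd_pairs_realize_forms:
  "odd (length (filter (\<lambda>p. a \<in> p \<and> b \<in> p) (realize_forms r fgs))) \<longleftrightarrow>
   (a \<in> r \<and> b \<in> r) \<noteq> sum_hyperbolic_forms fgs a b"
proof (induction r fgs rule: realize_forms.induct)
  case (2 r f g fgs)
  have F2: "((ar \<noteq> af) \<and> (br \<noteq> bf)) \<noteq> (((ar \<noteq> ag) \<and> (br \<noteq> bg)) \<noteq>
      ((((ar \<noteq> af) \<noteq> ag) \<and> ((br \<noteq> bf) \<noteq> bg)) \<noteq> X))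
    \<longleftrightarrow> (ar \<and> br) \<noteq> (((af \<and> bg) \<noteq> (ag \<and> bf)) \<noteq> X)" for ar af ag br bf bg X
    by (cases ar; cases af; cases ag; cases br; cases bf; cases bg; cases X; simp)
  have odd_filter: "odd (length (filter P (x # y # zs))) \<longleftrightarrow> P x \<noteq> (P y \<noteq> odd (length (filter P zs)))"
    for P x y and zs :: "nat set list"
    by simp
  show ?case
    unfolding realize_forms.simps odd_filter using 2
    by (simp only: mem_sym_diff sum_hyperbolic_forms.simps hyperbolic_form_def F2)
qed simp

lemma degree_two_parities_realizable:
  fixes \<sigma> :: "nat set \<Rightarrow> bool"
  shows "\<exists>ps. length ps \<le> m + 2 \<and>
    (\<forall>T. T \<subseteq> {..<m} \<and> card T \<le> 2 \<longrightarrow> odd (length (filter (\<lambda>p. T \<subseteq> p) ps)) = \<sigma> T)"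
proof -
  txt \<open>Pair parities of the points in realize_forms d fgs are d \<otimes> d + (sum of the forms);
    on the diagonal the forms vanish, so d must be the set of prescribed singleton parities.\<close>
  define d where "d = {a. a < m \<and> \<sigma> {a}}"
  define A where "A a b \<longleftrightarrow> a < m \<and> b < m \<and> (\<sigma> {a, b} \<noteq> (a \<in> d \<and> b \<in> d))" for a b
  obtain fgs where fgs: "2 * length fgs \<le> m" "\<forall>a b. A a b = sum_hyperbolic_forms fgs a b"
    using alternating_form_eq_sum_hyperbolic_forms[of "{..<m}" A]
    by (auto simp: A_def d_def insert_commute)
  define ps0 where "ps0 = realize_forms d fgs"
  have pairs: "odd (length (filter (\<lambda>p. a \<in> p \<and> b \<in> p) ps0)) = \<sigma> {a, b}" if "a < m" "b < m" for a b
    using odd_pairs_realize_forms[of a b d fgs] fgs(2) that unfolding ps0_def A_def by auto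
  define ps where "ps = (if odd (length ps0) = \<sigma> {} then ps0 else {} # ps0)"
  have "odd (length (filter (\<lambda>p. T \<subseteq> p) ps)) = \<sigma> T" if T: "T \<subseteq> {..<m}" "card T \<le> 2" for T
  proof (cases "T = {}")
    case True
    then show ?thesis by (auto simp: ps_def)
  next
    case False
    then have "card T = 1 \<or> card T = 2"
      using T finite_subset[OF T(1) finite_lessThan] card_0_eq[of T] by linarith
    then obtain a b where T_ab: "T = {a, b}"
      by (metis card_1_singletonE card_2_iff insert_absorb2)
    then have "filter (\<lambda>p. T \<subseteq> p) ps = filter (\<lambda>p. a \<in> p \<and> b \<in> p) ps0"
      by (auto simp: ps_def)
    then show ?thesis
      using pairs T(1) T_ab by simp
  qed
  moreover have "length ps \<le> m + 2"
    using fgs(1) length_realize_forms[of d fgs] by (auto simp: ps_def ps0_def)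
  ultimately show ?thesis by blast
qed

section \<open>Covering radius of Reed--Muller codes\<close>

definition hamming_dist :: "nat \<Rightarrow> bool list \<Rightarrow> bool list \<Rightarrow> nat" where
  "hamming_dist n x y = card {j. j < n \<and> x ! j \<noteq> y ! j}"

definition covers :: "nat \<Rightarrow> bool list set \<Rightarrow> nat \<Rightarrow> bool" where
  "covers n C \<rho> \<longleftrightarrow> (\<forall>x. length x = n \<longrightarrow> (\<exists>c\<in>C. hamming_dist n x c \<le> \<rho>))"

lemma covers_mono: "covers n C \<rho> \<Longrightarrow> \<rho> \<le> \<rho>' \<Longrightarrow> covers n C \<rho>'"
  unfolding covers_def by (blast intro: le_trans)

lemma hamming_dist_le: "hamming_dist n x y \<le> n"
  unfolding hamming_dist_def by (rule card_mono[of "{..<n}", simplified]) auto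

lemma hamming_dist_append:
  assumes "length x = h" and "length c = h"
  shows "hamming_dist (h + k) (x @ y) (c @ d) = hamming_dist h x c + hamming_dist k y d"
proof -
  have "{j. j < h + k \<and> (x @ y) ! j \<noteq> (c @ d) ! j}
        = {j. j < h \<and> x ! j \<noteq> c ! j} \<union> (+) h ` {j. j < k \<and> y ! j \<noteq> d ! j}"
  proof (intro equalityI subsetI)
    fix j assume "j \<in> {j. j < h + k \<and> (x @ y) ! j \<noteq> (c @ d) ! j}"
    then show "j \<in> {j. j < h \<and> x ! j \<noteq> c ! j} \<union> (+) h ` {j. j < k \<and> y ! j \<noteq> d ! j}"
      using assms by (cases "j < h") (auto simp: nth_append intro!: rev_image_eqI[of "j - h"])
  qed (use assms in \<open>auto simp: nth_append\<close>)
  moreover have "card ({j. j < h \<and> x ! j \<noteq> c ! j} \<union> (+) h ` {j. j < k \<and> y ! j \<noteq> d ! j})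
      = card {j. j < h \<and> x ! j \<noteq> c ! j} + card {j. j < k \<and> y ! j \<noteq> d ! j}"
    by (subst card_Un_disjoint) (auto simp: card_image)
  ultimately show ?thesis
    unfolding hamming_dist_def by simp
qed

lemma hamming_dist_word_add:
  assumes "length y = n" "length u = n" "length v = n"
  shows "hamming_dist n y (word_add u v) = hamming_dist n (word_add y u) v"
  unfolding hamming_dist_def using assms by (metis nth_word_add)

lemma covers_RM_order_zero: "covers (2^m) (RM 0 m) (2^m)"
  unfolding covers_def using replicate_False_in_RM hamming_dist_le by blast

text \<open>Flipping the word x by a set of at most m+2 positions with the same parities against the
  monomials of degree at most 2 lands in the dual code of RM(2,m), which is RM(m-3,m).\<close>

lemma covers_RM_codim_three: "covers (2^m) (RM (m - 3) m) (m + 2)"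
  unfolding covers_def
proof (intro allI impI)
  fix x :: "bool list" assume len_x: "length x = 2^m"
  obtain ps where ps: "length ps \<le> m + 2"
    "\<And>T. T \<subseteq> {..<m} \<Longrightarrow> card T \<le> 2 \<Longrightarrow>
       odd (length (filter (\<lambda>p. T \<subseteq> p) ps)) = odd (monomial_count m T x)"
    using degree_two_parities_realizable[of m "\<lambda>T. odd (monomial_count m T x)"] by blast
  define e where "e = unit_vector_sum m ps"
  have len_e: "length e = 2^m"
    by (simp add: e_def)
  have "word_add x e \<in> RM (m - 3) m"
  proof (rule in_RM_if_monomial_counts_even)
    fix T assume T: "T \<subseteq> {..<m}" "card T + (m - 3) < m"
    then show "even (monomial_count m T (word_add x e))"
      using ps(2)[of T] even_monomial_count_word_add[OF len_x len_e, of T]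
        even_monomial_count_unit_vector_sum[OF T(1), of ps]
      by (simp add: e_def)
  qed (use len_x len_e in simp)
  moreover have "hamming_dist (2^m) x (word_add x e) \<le> m + 2"
  proof -
    have "{j. j < 2^m \<and> x ! j \<noteq> word_add x e ! j} = {j. j < length e \<and> e ! j}"
      using len_x len_e by auto
    then have "hamming_dist (2^m) x (word_add x e) = length (filter (\<lambda>b. b) e)"
      by (simp add: hamming_dist_def length_filter_conv_card)
    also have "\<dots> \<le> length ps"
      unfolding e_def by (rule weight_unit_vector_sum_le)
    finally show ?thesis
      using ps(1) by linarith
  qed
  ultimately show "\<exists>c\<in>RM (m - 3) m. hamming_dist (2^m) x c \<le> m + 2" by blast
qed

text \<open>The (u | u + v) construction: cover the first half by u, then the second half minus u by v.\<close>

lemma covers_RM_Suc: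
  assumes "0 < r" "r \<le> m"
    and u: "covers (2^m) (RM r m) \<rho>\<^sub>1" and v: "covers (2^m) (RM (r - 1) m) \<rho>\<^sub>2"
  shows "covers (2^Suc m) (RM r (Suc m)) (\<rho>\<^sub>1 + \<rho>\<^sub>2)"
  unfolding covers_def
proof (intro allI impI)
  fix x :: "bool list" assume len_x: "length x = 2^Suc m"
  define x\<^sub>1 x\<^sub>2 where "x\<^sub>1 = take (2^m) x" and "x\<^sub>2 = drop (2^m) x"
  have len: "length x\<^sub>1 = 2^m" "length x\<^sub>2 = 2^m"
    using len_x by (simp_all add: x\<^sub>1_def x\<^sub>2_def)
  obtain c\<^sub>1 where c\<^sub>1: "c\<^sub>1 \<in> RM r m" "hamming_dist (2^m) x\<^sub>1 c\<^sub>1 \<le> \<rho>\<^sub>1"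
    using u len(1) unfolding covers_def by blast
  have len_c\<^sub>1: "length c\<^sub>1 = 2^m"
    using length_RM[OF c\<^sub>1(1)] .
  have "length (word_add x\<^sub>2 c\<^sub>1) = 2^m"
    using len(2) len_c\<^sub>1 by simp
  then obtain c\<^sub>2 where c\<^sub>2: "c\<^sub>2 \<in> RM (r - 1) m" "hamming_dist (2^m) (word_add x\<^sub>2 c\<^sub>1) c\<^sub>2 \<le> \<rho>\<^sub>2"
    using v unfolding covers_def by blast
  have len_c\<^sub>2: "length c\<^sub>2 = 2^m"
    using length_RM[OF c\<^sub>2(1)] .
  have "c\<^sub>1 @ word_add c\<^sub>1 c\<^sub>2 \<in> RM r (Suc m)"
    using assms(1,2) c\<^sub>1(1) c\<^sub>2(1) by (auto simp: RM_Suc)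
  moreover have "hamming_dist (2^Suc m) x (c\<^sub>1 @ word_add c\<^sub>1 c\<^sub>2) \<le> \<rho>\<^sub>1 + \<rho>\<^sub>2"
  proof -
    have "x = x\<^sub>1 @ x\<^sub>2"
      by (simp add: x\<^sub>1_def x\<^sub>2_def)
    then have "hamming_dist (2^Suc m) x (c\<^sub>1 @ word_add c\<^sub>1 c\<^sub>2)
        = hamming_dist (2^m) x\<^sub>1 c\<^sub>1 + hamming_dist (2^m) (word_add x\<^sub>2 c\<^sub>1) c\<^sub>2"
      using hamming_dist_append[OF len(1) len_c\<^sub>1, of "2^m" x\<^sub>2 "word_add c\<^sub>1 c\<^sub>2"]
        hamming_dist_word_add[OF len(2) len_c\<^sub>1 len_c\<^sub>2]
      by (simp add: mult_2)
    then show ?thesis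
      using c\<^sub>1(2) c\<^sub>2(2) by linarith
  qed
  ultimately show "\<exists>c\<in>RM r (Suc m). hamming_dist (2^Suc m) x c \<le> \<rho>\<^sub>1 + \<rho>\<^sub>2" by blast
qed

lemma covers_RM_codim:
  assumes "2^(i + 3) \<le> K" and "i + 3 \<le> m"
  shows "covers (2^m) (RM (m - (i + 3)) m) ((m choose (i + 1)) + K * (m choose i))"
  using assms
proof (induction i arbitrary: m)
  case 0
  then show ?case
    using covers_mono[OF covers_RM_codim_three[of m]] by simp
next
  case (Suc i)
  note K = Suc.prems(1) and IH_i = Suc.IH
  from Suc.prems(2) show ?case
  proof (induction m rule: nat_induct_at_least)
    case base
    have "2^(Suc i + 3) \<le> K"
      using K .
    also have "K \<le> K * (Suc i + 3 choose Suc i)"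
      by (simp add: Suc_le_eq)
    finally have "2^(Suc i + 3) \<le> (Suc i + 3 choose (Suc i + 1)) + K * (Suc i + 3 choose Suc i)"
      by linarith
    then show ?case
      using covers_mono[OF covers_RM_order_zero] by simp
  next
    case (Suc m)
    have "(2::nat)^(i + 3) \<le> 2^(Suc i + 3)"
      by (rule power_increasing) simp_all
    then have "2^(i + 3) \<le> K"
      using K by linarith
    then have u: "covers (2^m) (RM (m - (i + 3)) m) ((m choose (i + 1)) + K * (m choose i))"
      using IH_i[of m] Suc.hyps by simp
    have "covers (2^Suc m) (RM (m - (i + 3)) (Suc m))
        (((m choose (i + 1)) + K * (m choose i)) + ((m choose Suc (i + 1)) + K * (m choose Suc i)))"
      by (rule covers_RM_Suc[OF _ _ u]) (use Suc.hyps Suc.IH in \<open>simp_all add: numeral_eq_Suc\<close>)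
    then show ?case
      by (simp add: algebra_simps)
  qed
qed

section \<open>Generalized covering radius\<close>

lemma t_dist_le_sum_hamming_dist:
  "t_dist t n V W \<le> (\<Sum>i<t. hamming_dist n (V i) (W i))"
proof -
  have "{j. j < n \<and> (\<exists>i<t. V i ! j \<noteq> W i ! j)} = (\<Union>i<t. {j. j < n \<and> V i ! j \<noteq> W i ! j})"
    by auto
  then show ?thesis
    unfolding t_dist_def hamming_dist_def by (simp add: card_UN_le)
qed

lemma gen_cov_radius_le_if_covers:
  assumes "covers n C \<rho>"
  shows "gen_cov_radius t n C \<le> t * \<rho>"
  unfolding gen_cov_radius_def
proof (rule Least_le, intro allI impI)
  fix V :: "nat \<Rightarrow> bool list" assume "\<forall>i<t. length (V i) = n"
  then have "\<forall>i. \<exists>c. i < t \<longrightarrow> c \<in> C \<and> hamming_dist n (V i) c \<le> \<rho>"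
    using assms unfolding covers_def by blast
  then obtain W where W: "\<And>i. i < t \<Longrightarrow> W i \<in> C \<and> hamming_dist n (V i) (W i) \<le> \<rho>"
    by metis
  have "t_dist t n V W \<le> (\<Sum>i<t. hamming_dist n (V i) (W i))"
    by (rule t_dist_le_sum_hamming_dist)
  also have "\<dots> \<le> t * \<rho>"
    using sum_bounded_above[of "{..<t}" "\<lambda>i. hamming_dist n (V i) (W i)" \<rho>] W by simp
  finally show "\<exists>W. (\<forall>i<t. W i \<in> C) \<and> t_dist t n V W \<le> t * \<rho>"
    using W by blast
qed

lemma gen_cov_radius_covers:
  assumes "C \<noteq> {}" and "\<forall>i<t. length (V i) = n"
  shows "\<exists>W. (\<forall>i<t. W i \<in> C) \<and> t_dist t n V W \<le> gen_cov_radius t n C"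
proof -
  obtain c where "c \<in> C"
    using assms(1) by blast
  have "\<exists>W. (\<forall>i<t. W i \<in> C) \<and> t_dist t n V' W \<le> n" for V'
  proof (intro exI[of _ "\<lambda>_. c"] conjI)
    have "t_dist t n V' (\<lambda>_. c) \<le> card {..<n}"
      unfolding t_dist_def by (rule card_mono) auto
    then show "t_dist t n V' (\<lambda>_. c) \<le> n" by simp
  qed (use \<open>c \<in> C\<close> in simp)
  then show ?thesis
    unfolding gen_cov_radius_def using LeastI_ex[where P = "\<lambda>\<rho>. \<forall>V. (\<forall>i<t. length (V i) = n) \<longrightarrow>
        (\<exists>W. (\<forall>i<t. W i \<in> C) \<and> t_dist t n V W \<le> \<rho>)"] assms(2) by blast
qed

definition flip_columns :: "nat \<Rightarrow> nat \<Rightarrow> (nat \<Rightarrow> bool list) \<Rightarrow> (nat \<times> nat set) list \<Rightarrow> nat \<Rightarrow> bool list" where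
  "flip_columns t n W es =
     restrict (\<lambda>i. map (\<lambda>j. W i ! j \<noteq> (\<exists>p \<in> set es. fst p = j \<and> i \<in> snd p)) [0..<n]) {..<t}"

lemma flip_columns_restrict: "flip_columns t n (restrict W {..<t}) es = flip_columns t n W es"
  by (auto simp: flip_columns_def)

lemma exists_flip_columns:
  assumes "V \<in> {..<t} \<rightarrow>\<^sub>E {w. length w = n}" and "t_dist t n V W \<le> R" and "0 < n"
  shows "\<exists>es \<in> {es. set es \<subseteq> {..<n} \<times> Pow {..<t} \<and> length es = R}. flip_columns t n W es = V"
proof -
  define S where "S = {j. j < n \<and> (\<exists>i<t. V i ! j \<noteq> W i ! j)}"
  have "finite S" "card S \<le> R"
    using assms(2) by (simp_all add: S_def t_dist_def)
  define es where "es = map (\<lambda>j. (j, {i. i < t \<and> V i ! j \<noteq> W i ! j})) (sorted_list_of_set S)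
      @ replicate (R - card S) (0, {})"
  have "set es \<subseteq> {..<n} \<times> Pow {..<t}" "length es = R"
    using \<open>finite S\<close> \<open>card S \<le> R\<close> assms(3) by (auto simp: es_def S_def)
  moreover have "flip_columns t n W es = V"
  proof
    fix i
    show "flip_columns t n W es i = V i"
    proof (cases "i < t")
      case True
      have "(\<exists>p \<in> set es. fst p = j \<and> i \<in> snd p) \<longleftrightarrow> V i ! j \<noteq> W i ! j" if "j < n" for j
        using \<open>finite S\<close> True that by (auto simp: es_def S_def set_replicate_conv_if)
      moreover have "length (V i) = n"
        using True assms(1) by auto
      ultimately have "map (\<lambda>j. W i ! j \<noteq> (\<exists>p \<in> set es. fst p = j \<and> i \<in> snd p)) [0..<n] = V i"
        by (intro nth_equalityI) auto
      then show ?thesis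
        using True by (simp add: flip_columns_def)
    next
      case False
      then show ?thesis
        using assms(1) by (simp add: flip_columns_def PiE_iff extensional_def)
    qed
  qed
  ultimately show ?thesis by blast
qed

text \<open>Sphere-covering bound: the t-balls of radius R around the t-tuples of codewords cover
  all t-tuples of words, and each has at most (n 2^t)^R elements.\<close>

lemma card_tuples_le_card_balls:
  fixes C :: "bool list set"
  assumes "finite C" and "0 < n"
    and cov: "\<And>V. \<forall>i<t. length (V i) = n \<Longrightarrow> \<exists>W. (\<forall>i<t. W i \<in> C) \<and> t_dist t n V W \<le> R"
  shows "(2^n)^t \<le> card C ^ t * (n * 2^t)^R"
proof -
  define Vs where "Vs = {..<t} \<rightarrow>\<^sub>E {w :: bool list. length w = n}"
  define Ws where "Ws = {..<t} \<rightarrow>\<^sub>E C"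
  define Es where "Es = {es. set es \<subseteq> {..<n} \<times> Pow {..<t} \<and> length es = R}"
  have "Vs \<subseteq> (\<lambda>(W, es). flip_columns t n W es) ` (Ws \<times> Es)"
  proof
    fix V assume V: "V \<in> Vs"
    then have "\<forall>i<t. length (V i) = n"
      by (auto simp: Vs_def)
    then obtain W where W: "\<forall>i<t. W i \<in> C" "t_dist t n V W \<le> R"
      using cov by blast
    then obtain es where "es \<in> Es" "flip_columns t n (restrict W {..<t}) es = V"
      using exists_flip_columns[of V t n W R] V assms(2) by (auto simp: Vs_def Es_def flip_columns_restrict)
    moreover have "restrict W {..<t} \<in> Ws"
      using W(1) by (simp add: Ws_def)
    ultimately show "V \<in> (\<lambda>(W, es). flip_columns t n W es) ` (Ws \<times> Es)"
      by force
  qed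
  moreover have "finite Ws" "finite Es"
    using assms(1) finite_lists_length_eq[of "{..<n} \<times> Pow {..<t}" R]
    by (simp_all add: Ws_def Es_def finite_PiE)
  ultimately have "card Vs \<le> card (Ws \<times> Es)"
    by (meson card_image_le card_mono finite_SigmaI order_trans finite_imageI)
  moreover have "card Vs = (2^n)^t"
    by (simp add: Vs_def card_PiE card_words)
  moreover have "card (Ws \<times> Es) = card C ^ t * (n * 2^t)^R"
    using card_lists_length_eq[of "{..<n} \<times> Pow {..<t}" R]
    by (simp add: Ws_def Es_def card_PiE card_cartesian_product card_Pow)
  ultimately show ?thesis by simp
qed

lemma binomial_le_R_RM: "t * (m choose (r + 1)) \<le> (m + t) * R_RM t r m"
proof -
  let ?C = "RM r m" and ?R = "R_RM t r m" and ?D = "m choose (r + 1)"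
  have "?C \<noteq> {}"
    using replicate_False_in_RM by blast
  then have "(2^2^m)^t \<le> card ?C ^ t * (2^m * 2^t)^?R"
    unfolding R_RM_def by (intro card_tuples_le_card_balls[OF finite_RM] gen_cov_radius_covers) simp_all
  also have "(2^m * 2^t)^?R = (2::nat)^((m + t) * ?R)"
    by (simp add: power_add power_mult)
  finally have "2^(2^m * t) * 2^(?D * t) \<le> card ?C ^ t * 2^((m + t) * ?R) * 2^(?D * t)"
    by (simp add: power_mult)
  also have "\<dots> = (card ?C * 2^?D)^t * 2^((m + t) * ?R)"
    by (simp add: power_mult_distrib power_mult)
  also have "\<dots> \<le> (2^2^m)^t * 2^((m + t) * ?R)"
    using card_RM_le[of r m] by (intro mult_le_mono1 power_mono) simp_all
  also have "\<dots> = 2^(2^m * t) * 2^((m + t) * ?R)"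
    by (simp add: power_mult)
  finally have "(2::nat)^(?D * t) \<le> 2^((m + t) * ?R)"
    by (simp add: power_mult)
  then show ?thesis
    by (simp add: mult.commute)
qed

section \<open>Asymptotics\<close>

lemma binomial_times_fact_le_power: "real (m choose k) * fact k \<le> real m ^ k"
proof -
  have "real ((m choose k) * fact k) \<le> real (m ^ k)"
    by (rule of_nat_mono[OF binomial_fact_pow])
  then show ?thesis
    by simp
qed

lemma falling_factorial_ge:
  fixes x :: real
  assumes "real (Suc j) \<le> x"
  shows "x ^ Suc j - (real (Suc j))^2 * x ^ j \<le> (\<Prod>l<Suc j. x - real l)"
  using assms
proof (induction j)
  case (Suc j)
  define q y where "q = real (Suc j)" and "y = x ^ j"
  have x: "0 \<le> x" "q \<le> x" and q: "0 \<le> q" and y: "0 \<le> y"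
    using Suc.prems by (simp_all add: q_def y_def)
  have "(x * y - q^2 * y) * (x - q) - (x * x * y - (q + 1)^2 * x * y) = x * y + q * x * y + q^3 * y"
    by (simp add: algebra_simps power2_eq_square power3_eq_cube)
  moreover have "0 \<le> x * y + q * x * y + q^3 * y"
    using x q y by simp
  ultimately have "x * x * y - (q + 1)^2 * x * y \<le> (x * y - q^2 * y) * (x - q)"
    by linarith
  also have "\<dots> \<le> (\<Prod>l<Suc j. x - real l) * (x - q)"
    using Suc x by (intro mult_right_mono) (simp_all add: q_def y_def)
  finally show ?case
    by (simp add: q_def y_def algebra_simps)
qed simp

lemma binomial_fact_ge:
  assumes "Suc j \<le> m"
  shows "real m ^ Suc j - (real (Suc j))^2 * real m ^ j \<le> real (m choose Suc j) * fact (Suc j)"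
proof -
  have "real (m choose Suc j) * fact (Suc j) = (real m gchoose Suc j) * fact (Suc j)"
    by (simp add: binomial_gbinomial)
  also have "\<dots> = (\<Prod>l = 0..<Suc j. real m - of_nat l)"
    by (rule gbinomial_mult_fact')
  also have "\<dots> = (\<Prod>l<Suc j. real m - real l)"
    by (simp add: atLeast0LessThan)
  finally show ?thesis
    using falling_factorial_ge[of j "real m"] assms by simp
qed

lemma binomial_fact_minus_power_bound:
  assumes "i + 2 \<le> m"
  shows "\<bar>real (m choose (i + 2)) * fact (i + 2) - real m ^ (i + 1) * (real m + real t)\<bar>
         \<le> ((real (i + 2))^2 + real t) * real m ^ (i + 1)"
proof -
  define P x y q where "P = real (m choose (i + 2)) * fact (i + 2)" and "x = real m"
    and "y = real m ^ (i + 1)" and "q = (real (i + 2))^2"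
  have "P \<le> real m ^ (i + 2)"
    unfolding P_def by (rule binomial_times_fact_le_power)
  also have "real m ^ (i + 2) = x * y"
    by (simp add: x_def y_def power_add power2_eq_square)
  finally have "P \<le> x * y" .
  moreover have "x * y - q * y \<le> P"
    using binomial_fact_ge[of "i + 1" m] assms by (simp add: P_def x_def y_def q_def)
  moreover have "0 \<le> real t * y"
    by (simp add: y_def)
  ultimately have "\<bar>P - (x * y + real t * y)\<bar> \<le> q * y + real t * y"
    by (simp only: abs_le_iff) linarith
  then have "\<bar>P - y * (x + real t)\<bar> \<le> (q + real t) * y"
    by (simp only: distrib_left distrib_right mult.commute)
  then show ?thesis
    by (simp only: P_def x_def y_def q_def)
qed

lemma binomial_over_linear_bigo:
  "(\<lambda>m. real t * real (m choose (i + 2)) / (real m + real t) - real t / fact (i + 2) * real m ^ (i + 1))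
   \<in> O(\<lambda>m. real m ^ i)"
proof -
  define c where "c = real t * ((real (i + 2))^2 + real t) / fact (i + 2)"
  have "\<bar>real t * real (m choose (i + 2)) / (real m + real t) - real t / fact (i + 2) * real m ^ (i + 1)\<bar>
        \<le> c * real m ^ i" if m: "i + 2 \<le> m" for m
  proof -
    define N where "N = real (m choose (i + 2)) * fact (i + 2) - real m ^ (i + 1) * (real m + real t)"
    have pos: "0 < real m + real t"
      using m by simp
    have "real t * real (m choose (i + 2)) / (real m + real t) - real t / fact (i + 2) * real m ^ (i + 1)
        = real t / fact (i + 2) * (N / (real m + real t))"
    proof -
      have "a * b / d - a / f * z = a / f * ((b * f - z * d) / d)" if "f \<noteq> 0" "d \<noteq> 0"
        for a b d f z :: real
        using that by (simp add: field_simps)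
      then show ?thesis
        using pos by (simp add: N_def)
    qed
    also have "\<bar>\<dots>\<bar> = real t / fact (i + 2) * (\<bar>N\<bar> / (real m + real t))"
      using pos by (simp add: abs_mult)
    also have "\<dots> \<le> real t / fact (i + 2) * (((real (i + 2))^2 + real t) * real m ^ (i + 1) / (real m + real t))"
      using binomial_fact_minus_power_bound[OF m, of t] pos unfolding N_def
      by (intro mult_left_mono divide_right_mono) simp_all
    also have "\<dots> \<le> real t / fact (i + 2) * (((real (i + 2))^2 + real t) * real m ^ i)"
    proof -
      have "real m ^ (i + 1) \<le> (real m + real t) * real m ^ i"
        by (simp add: algebra_simps)
      then have "real m ^ (i + 1) / (real m + real t) \<le> real m ^ i"
        using pos by (simp add: divide_le_eq mult.commute)
      then have "((real (i + 2))^2 + real t) * (real m ^ (i + 1) / (real m + real t))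
          \<le> ((real (i + 2))^2 + real t) * real m ^ i"
        by (rule mult_left_mono) simp
      then show ?thesis
        by (intro mult_left_mono) simp_all
    qed
    finally show ?thesis
      by (simp add: c_def)
  qed
  then have "\<forall>\<^sub>F m in at_top. norm (real t * real (m choose (i + 2)) / (real m + real t)
      - real t / fact (i + 2) * real m ^ (i + 1)) \<le> c * norm (real m ^ i)"
    unfolding eventually_at_top_linorder by (intro exI[of _ "i + 2"]) simp
  then show ?thesis
    by (rule bigoI)
qed

lemma one_bigo_ln: "(\<lambda>_::nat. 1::real) \<in> O(\<lambda>m. ln (real m))"
proof -
  have "filterlim (\<lambda>m::nat. ln (real m)) at_top at_top"
    by (rule filterlim_compose[OF ln_at_top filterlim_real_sequentially])
  then have "\<forall>\<^sub>F m in at_top. 1 \<le> ln (real m)"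
    by (simp add: filterlim_at_top)
  then show ?thesis
    by (intro bigoI[where c = 1]) (auto elim: eventually_mono)
qed

lemma R_RM_codim_le:
  assumes "i + 3 \<le> m"
  shows "real (R_RM t (m - (i + 3)) m) \<le> real t / fact (i + 1) * real m ^ (i + 1) + real t * 2^(i + 3) * real m ^ i"
proof -
  have "R_RM t (m - (i + 3)) m \<le> t * ((m choose (i + 1)) + 2^(i + 3) * (m choose i))"
    unfolding R_RM_def by (rule gen_cov_radius_le_if_covers[OF covers_RM_codim[OF order_refl assms]])
  then have "real (R_RM t (m - (i + 3)) m) \<le> real t * (real (m choose (i + 1)) + 2^(i + 3) * real (m choose i))"
    using of_nat_mono by fastforce
  also have "\<dots> \<le> real t * (real m ^ (i + 1) / fact (i + 1) + 2^(i + 3) * real m ^ i)"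
  proof -
    have "m choose i \<le> m ^ i"
      using assms by (intro binomial_le_pow) simp
    then have "real (m choose i) \<le> real m ^ i"
      by simp
    then show ?thesis
      using binomial_times_fact_le_power[of m "i + 1"] by (intro mult_left_mono add_mono) (simp_all add: le_divide_eq)
  qed
  also have "\<dots> = real t / fact (i + 1) * real m ^ (i + 1) + real t * 2^(i + 3) * real m ^ i"
    by (simp only: distrib_left times_divide_eq_right times_divide_eq_left mult.assoc)
  finally show ?thesis .
qed

lemma R_RM_codim_ge:
  assumes "i + 3 \<le> m"
  shows "real t * real (m choose (i + 2)) / (real m + real t) \<le> real (R_RM t (m - (i + 3)) m)"
proof -
  have "m choose (m - (i + 3) + 1) = m choose (i + 2)"
    using binomial_symmetric[of "m - (i + 3) + 1" m] assms by simp
  then have "real t * real (m choose (i + 2)) \<le> (real m + real t) * real (R_RM t (m - (i + 3)) m)"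
    using of_nat_mono[OF binomial_le_R_RM[of t m "m - (i + 3)"]] by simp
  moreover have "0 < real m + real t"
    using assms by simp
  ultimately show ?thesis
    by (simp add: divide_le_eq mult.commute)
qed

theorem theorem15:
  fixes t s :: nat
  assumes "t \<ge> 1" and "s \<ge> 3"
  shows "\<exists>f g :: nat \<Rightarrow> real.
           f \<in> O(\<lambda>m. real m ^ (s - 3) * ln (real m)) \<and>
           g \<in> O(\<lambda>m. real m ^ (s - 3)) \<and>
           (\<forall>m\<ge>s.
              real t / fact (s - 1) * real m ^ (s - 2) + f m \<le> real (R_RM t (m - s) m) \<and>
              real (R_RM t (m - s) m) \<le> real t / fact (s - 2) * real m ^ (s - 2) + g m)"
proof -
  obtain i where s: "s = i + 3"
    using assms(2) by (metis add.commute le_Suc_ex)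
  define f :: "nat \<Rightarrow> real" where
    "f m = real t * real (m choose (i + 2)) / (real m + real t) - real t / fact (i + 2) * real m ^ (i + 1)" for m
  define g :: "nat \<Rightarrow> real" where
    "g m = real t * 2^(i + 3) * real m ^ i" for m
  have f_bigo: "f \<in> O(\<lambda>m. real m ^ i * ln (real m))"
    unfolding f_def by (rule landau_o.big_mult_1[OF binomial_over_linear_bigo one_bigo_ln])
  have g_bigo: "g \<in> O(\<lambda>m. real m ^ i)"
    by (intro bigoI[where c = "real t * 2^(i + 3)"] always_eventually allI) (simp add: g_def)
  have lower: "real t / fact (i + 2) * real m ^ (i + 1) + f m \<le> real (R_RM t (m - (i + 3)) m)"
    if "i + 3 \<le> m" for m
    using R_RM_codim_ge[OF that, of t] unfolding f_def by linarith
  have upper: "real (R_RM t (m - (i + 3)) m) \<le> real t / fact (i + 1) * real m ^ (i + 1) + g m"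
    if "i + 3 \<le> m" for m
    using R_RM_codim_le[OF that, of t] unfolding g_def by linarith
  have indices: "s - 3 = i" "s - 2 = i + 1" "s - 1 = i + 2"
    using s by simp_all
  show ?thesis
    unfolding indices unfolding s
    by (intro exI[of _ f] exI[of _ g] conjI allI impI f_bigo g_bigo lower upper) assumption+
qed

end
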